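(* Let $a$ be an integer, let $n$ be a positive odd integer, and let $q\neq 1$ be a positive real number. Define the $n\times n$ matrices $$A=\left[q^{\lfloor\frac{aj-(a+1)k}{n}\rfloor}\right]_{1\leqslant j,k\leqslant n},\qquad A'=\left[q^{\lceil\frac{(a+1)j-ak}{n}\rceil}\right]_{1\leqslant j,k\leqslant n}.$$ If $\gcd(a(a+1),n)>1$, then $$\operatorname{rank}(A)\leqslant\frac n3\quad\text{and}\quad \operatorname{rank}(A')\leqslant\frac n3.$$
   Context: $\lfloor x\rfloor$ is the largest integer not exceeding $x$ and $\lceil x\rceil$ is the least integer not smaller than $x$. *)

theory Defs
  imports "Jordan_Normal_Form.DL_Rank"
begin

(* Matrices use 0-based indices in Jordan_Normal_Form; entry (j,k) here
   corresponds to the paper's entry (j+1,k+1). *)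
definition matA :: "int \<Rightarrow> nat \<Rightarrow> real \<Rightarrow> real mat" where
  "matA a n q = mat n n (\<lambda>(j,k). q powr real_of_int
      \<lfloor>(real_of_int (a * int (j+1) - (a+1) * int (k+1))) / real n\<rfloor>)"

definition matA' :: "int \<Rightarrow> nat \<Rightarrow> real \<Rightarrow> real mat" where
  "matA' a n q = mat n n (\<lambda>(j,k). q powr real_of_int
      \<lceil>(real_of_int ((a+1) * int (j+1) - a * int (k+1))) / real n\<rceil>)"

end

(*
  Write e(j,k) = floor((a j - (a+1) k) / n). Splitting a j = n floor(a j / n) + (a j mod n) gives
  q^e(j,k) = q^floor(a j / n) * q^floor(((a j mod n) - (a+1) k) / n), so row j of A is a multiple
  of a row that depends only on the residue a j mod n. These residues are multiples of
  g = gcd(a, n), so there are at most n/g of them, and g >= 3 because n is odd. When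
  gcd(a+1, n) > 1 one splits off (a+1) k instead and argues with columns; A' is treated in the
  same way after writing ceil x = - floor (- x).
*)
theory Submission imports Defs begin

lemma (in vec_space) rank_le_card_sum_products:
  fixes f g :: "'b \<Rightarrow> nat \<Rightarrow> 'a"
  assumes A: "A \<in> carrier_mat n nc" and fin: "finite C"
    and entries: "\<And>r c. r < n \<Longrightarrow> c < nc \<Longrightarrow> A $$ (r,c) = (\<Sum>i\<in>C. f i r * g i c)"
  shows "rank A \<le> card C"
proof -
  have "rank (mat n nc (\<lambda>(r,c). \<Sum>i\<in>C. f i r * g i c)) \<le> card C"
    using fin
  proof (induction C rule: finite_induct)
    case empty
    have "mat n nc (\<lambda>(r,c). \<Sum>i\<in>{}. f i r * g i c) = 0\<^sub>m n nc"
      by (intro eq_matI) auto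
    then show ?case
      by (simp only: rank_0I card.empty order_refl)
  next
    case (insert x C)
    let ?M = "mat n nc (\<lambda>(r,c). \<Sum>i\<in>C. f i r * g i c)"
    let ?P = "mat n nc (\<lambda>(r,c). f x r * g x c)"
    have "mat n nc (\<lambda>(r,c). \<Sum>i\<in>insert x C. f i r * g i c) = ?P + ?M"
      using insert.hyps by (intro eq_matI) auto
    moreover have "rank (?P + ?M) \<le> rank ?P + rank ?M"
      by (rule rank_subadditive) auto
    moreover have "rank ?P \<le> 1"
      by (rule rank_le_1_product_entries) auto
    ultimately show ?case using insert by simp
  qed
  moreover have "A = mat n nc (\<lambda>(r,c). \<Sum>i\<in>C. f i r * g i c)"
    using A entries by (intro eq_matI) auto
  ultimately show ?thesis by simp
qed

lemma (in vec_space) rank_le_card_row_classes: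
  fixes \<phi> :: "nat \<Rightarrow> 'a" and \<psi> :: "'b \<Rightarrow> nat \<Rightarrow> 'a"
  assumes "A \<in> carrier_mat n nc"
    and "\<And>r c. r < n \<Longrightarrow> c < nc \<Longrightarrow> A $$ (r,c) = \<phi> r * \<psi> (K r) c"
  shows "rank A \<le> card (K ` {..<n})"
proof (rule rank_le_card_sum_products[OF assms(1)])
  fix r c assume "r < n" "c < nc"
  then show "A $$ (r,c) = (\<Sum>i\<in>K ` {..<n}. (if K r = i then \<phi> r else 0) * \<psi> i c)"
    by (subst sum.cong[OF refl, where h="\<lambda>i. if K r = i then \<phi> r * \<psi> i c else 0"])
      (auto simp: assms(2) sum.delta')
qed simp

lemma (in vec_space) rank_le_card_col_classes:
  fixes \<phi> :: "nat \<Rightarrow> 'a" and \<psi> :: "nat \<Rightarrow> 'b \<Rightarrow> 'a"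
  assumes "A \<in> carrier_mat n nc"
    and "\<And>r c. r < n \<Longrightarrow> c < nc \<Longrightarrow> A $$ (r,c) = \<psi> r (K c) * \<phi> c"
  shows "rank A \<le> card (K ` {..<nc})"
proof (rule rank_le_card_sum_products[OF assms(1)])
  fix r c assume "r < n" "c < nc"
  then show "A $$ (r,c) = (\<Sum>i\<in>K ` {..<nc}. \<psi> r i * (if K c = i then \<phi> c else 0))"
    by (subst sum.cong[OF refl, where h="\<lambda>i. if K c = i then \<psi> r i * \<phi> c else 0"])
      (auto simp: assms(2) sum.delta')
qed simp

lemma add_div_eq_div_add_mod_add_div:
  fixes s t N :: int
  assumes "N > 0"
  shows "(s + t) div N = s div N + (s mod N + t) div N"
proof -
  have "s + t = (s mod N + t) + s div N * N"
    by simp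
  then have "(s + t) div N = (s mod N + t + s div N * N) div N"
    by (rule arg_cong)
  also have "\<dots> = s div N + (s mod N + t) div N"
    using assms by (intro div_mult_self1) simp
  finally show ?thesis .
qed

lemma (in vec_space) rank_le_card_residues:
  fixes F :: "int \<Rightarrow> 'a" and x y :: "nat \<Rightarrow> int" and N :: int
  assumes A: "A \<in> carrier_mat n nc" and N: "N > 0"
    and F_add: "\<And>s t. F (s + t) = F s * F t"
    and entries: "\<And>r c. r < n \<Longrightarrow> c < nc \<Longrightarrow> A $$ (r,c) = F ((x r + y c) div N)"
  shows "rank A \<le> card ((\<lambda>r. x r mod N) ` {..<n})"
    and "rank A \<le> card ((\<lambda>c. y c mod N) ` {..<nc})"
proof -
  show "rank A \<le> card ((\<lambda>r. x r mod N) ` {..<n})"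
  proof (rule rank_le_card_row_classes[OF A, where \<phi> = "\<lambda>r. F (x r div N)"
        and \<psi> = "\<lambda>u c. F ((u + y c) div N)"])
    fix r c assume "r < n" "c < nc"
    then show "A $$ (r,c) = F (x r div N) * F ((x r mod N + y c) div N)"
      by (simp only: entries add_div_eq_div_add_mod_add_div[OF N, of "x r"] F_add)
  qed
  show "rank A \<le> card ((\<lambda>c. y c mod N) ` {..<nc})"
  proof (rule rank_le_card_col_classes[OF A, where \<phi> = "\<lambda>c. F (y c div N)"
        and \<psi> = "\<lambda>r u. F ((u + x r) div N)"])
    fix r c assume "r < n" "c < nc"
    then show "A $$ (r,c) = F ((y c mod N + x r) div N) * F (y c div N)"
      by (simp only: entries add.commute[of "x r"] add_div_eq_div_add_mod_add_div[OF N, of "y c"]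
          F_add mult.commute)
  qed
qed

lemma card_mult_residues_le:
  fixes b N :: int and x :: "'b \<Rightarrow> int"
  assumes "N > 0"
  shows "card ((\<lambda>i. (b * x i) mod N) ` I) \<le> nat (N div gcd b N)"
proof -
  let ?g = "gcd b N"
  have g: "?g > 0"
    using assms by simp
  have "(\<lambda>i. (b * x i) mod N) ` I \<subseteq> (\<lambda>m. ?g * m) ` {0..<N div ?g}"
  proof
    fix y assume "y \<in> (\<lambda>i. (b * x i) mod N) ` I"
    then obtain i where y: "y = (b * x i) mod N" by auto
    then have "?g dvd y"
      by (simp add: dvd_mod)
    then obtain m where m: "y = ?g * m" by auto
    have "0 \<le> ?g * m" "?g * m < ?g * (N div ?g)"
      using y m assms by simp_all
    then have "0 \<le> m" "m < N div ?g"
      using g by (simp_all only: zero_le_mult_iff mult_less_cancel_left_pos) linarith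
    then show "y \<in> (\<lambda>m. ?g * m) ` {0..<N div ?g}"
      unfolding m by (intro imageI) simp
  qed
  then have "card ((\<lambda>i. (b * x i) mod N) ` I) \<le> card ((\<lambda>m. ?g * m) ` {0..<N div ?g})"
    by (rule card_mono[rotated]) simp
  also have "\<dots> \<le> card {0..<N div ?g}"
    by (rule card_image_le) simp
  finally show ?thesis by simp
qed

lemma (in vec_space) rank_le_div_gcd:
  fixes F :: "int \<Rightarrow> 'a" and x y :: "nat \<Rightarrow> int" and b d N :: int
  assumes A: "A \<in> carrier_mat n nc" and N: "N > 0"
    and F_add: "\<And>s t. F (s + t) = F s * F t"
    and entries: "\<And>r c. r < n \<Longrightarrow> c < nc \<Longrightarrow> A $$ (r,c) = F ((b * x r + d * y c) div N)"
  shows "rank A \<le> nat (N div gcd b N)" and "rank A \<le> nat (N div gcd d N)"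
proof -
  note residues = rank_le_card_residues[OF A N F_add, of "\<lambda>r. b * x r" "\<lambda>c. d * y c", OF entries]
  show "rank A \<le> nat (N div gcd b N)"
    using residues(1) card_mult_residues_le[OF N] by (rule le_trans)
  show "rank A \<le> nat (N div gcd d N)"
    using residues(2) card_mult_residues_le[OF N] by (rule le_trans)
qed

lemma three_mult_div_le_if_odd:
  fixes N d :: int
  assumes "odd N" "d dvd N" "d > 1" "N > 0"
  shows "3 * (N div d) \<le> N"
proof -
  have "odd d"
    using assms(1,2) dvd_trans by blast
  with assms(3) have "3 \<le> d"
    by presburger
  moreover have "0 \<le> N div d"
    using assms(3,4) by (simp add: pos_imp_zdiv_nonneg_iff)
  ultimately have "3 * (N div d) \<le> d * (N div d)"
    by (rule mult_right_mono)
  also have "\<dots> = N"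
    using assms(2) by simp
  finally show ?thesis .
qed

lemma gcd_mult_gt_1_cases:
  fixes a b N :: int
  assumes "gcd (a * b) N > 1"
  shows "gcd a N > 1 \<or> gcd b N > 1"
proof (rule ccontr)
  assume "\<not> ?thesis"
  moreover have "gcd a N \<noteq> 0" "gcd b N \<noteq> 0"
    using assms by auto
  ultimately have "gcd a N = 1" "gcd b N = 1"
    using gcd_ge_0_int[of a N] gcd_ge_0_int[of b N] by linarith+
  then have "coprime a N" "coprime b N"
    by (simp_all add: coprime_iff_gcd_eq_1)
  then have "coprime (a * b) N"
    by simp
  then show False
    using assms coprime_imp_gcd_eq_1 by (metis less_irrefl)
qed

lemma floor_of_int_divide_of_nat: "\<lfloor>real_of_int m / real n\<rfloor> = m div int n"
  by (metis floor_divide_of_int_eq of_int_of_nat_eq)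

lemma matA_entry:
  assumes "j < n" "k < n"
  shows "matA a n q $$ (j,k) = q powr real_of_int ((a * int (j+1) + - (a+1) * int (k+1)) div int n)"
proof -
  have "matA a n q $$ (j,k) = q powr real_of_int ((a * int (j+1) - (a+1) * int (k+1)) div int n)"
    by (simp only: matA_def index_mat(1) assms prod.case floor_of_int_divide_of_nat)
  then show ?thesis
    by (simp only: minus_mult_left diff_conv_add_uminus)
qed

lemma matA'_entry:
  assumes "j < n" "k < n"
  shows "matA' a n q $$ (j,k) = q powr - real_of_int ((- (a+1) * int (j+1) + a * int (k+1)) div int n)"
proof -
  have "matA' a n q $$ (j,k) = q powr real_of_int (- ((- ((a+1) * int (j+1) - a * int (k+1))) div int n))"
    by (simp only: matA'_def index_mat(1) assms prod.case ceiling_def minus_divide_left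
        of_int_minus[symmetric] floor_of_int_divide_of_nat)
  moreover have "- ((a+1) * int (j+1) - a * int (k+1)) = - (a+1) * int (j+1) + a * int (k+1)"
    by (simp add: algebra_simps)
  ultimately show ?thesis
    by (simp only: of_int_minus)
qed

theorem lemma3p1:
  fixes a :: int and n :: nat and q :: real
  assumes "n > 0" and "odd n" and "q > 0" and "q \<noteq> 1"
    and "gcd (a * (a + 1)) (int n) > 1"
  shows "real (vec_space.rank n (matA a n q)) \<le> real n / 3
       \<and> real (vec_space.rank n (matA' a n q)) \<le> real n / 3"
proof -
  define N where "N = int n"
  have N: "N > 0" "odd N"
    using assms(1,2) by (simp_all add: N_def)
  have carrier: "matA a n q \<in> carrier_mat n n" "matA' a n q \<in> carrier_mat n n"
    by (simp_all add: matA_def matA'_def)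
  have F_add: "\<And>s t. q powr real_of_int (s + t) = q powr real_of_int s * q powr real_of_int t"
    "\<And>s t. q powr - real_of_int (s + t) = q powr - real_of_int s * q powr - real_of_int t"
    by (simp_all only: of_int_add minus_add_distrib powr_add)
  note rank_matA = vec_space.rank_le_div_gcd[where F = "\<lambda>t. q powr real_of_int t",
      OF carrier(1) N(1) F_add(1) matA_entry[where n = n, folded N_def]]
   and rank_matA' = vec_space.rank_le_div_gcd[where F = "\<lambda>t. q powr - real_of_int t",
      OF carrier(2) N(1) F_add(2) matA'_entry[where n = n, folded N_def]]
  obtain b where "b = a \<or> b = - (a + 1)" and b: "gcd b N > 1"
    using gcd_mult_gt_1_cases[OF assms(5)[folded N_def]] by (metis gcd_neg1_int)
  then have "vec_space.rank n (matA a n q) \<le> nat (N div gcd b N)"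
    and "vec_space.rank n (matA' a n q) \<le> nat (N div gcd b N)"
    using rank_matA rank_matA' by auto
  moreover have "3 * (N div gcd b N) \<le> N"
    using N b by (intro three_mult_div_le_if_odd) auto
  ultimately show ?thesis
    by (simp add: N_def) linarith
qed

end
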